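(* (1) There is a saturated structure $\mathfrak A_{\mathrm{sat}}$ of cardinality $2^\omega$ such that $\mathrm{Inv}(\mathrm{Pol}^\omega(\mathfrak A_{\mathrm{sat}}))\neq\langle\mathfrak A_{\mathrm{sat}}\rangle_{\mathrm{pp}}$. (2) There is a saturated structure $\mathfrak A_{\mathrm{sat}}$ of cardinality $2^\omega$ such that $\mathrm{Inv}(\mathrm{Pol}(\mathfrak A_{\mathrm{sat}}))\cap\langle\mathfrak A_{\mathrm{sat}}\rangle_{\mathrm{fo}}\neq\langle\mathfrak A_{\mathrm{sat}}\rangle_{\mathrm{pp}}$. (3) There is a structure $\mathfrak A$ such that $\mathrm{Inv}(\mathrm{Pol}^\omega(\mathfrak A))\cap\langle\mathfrak A\rangle_{\mathrm{fo}}\neq\langle\mathfrak A\rangle_{\mathrm{pp}}$.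
   Context: Structures are over relational signatures (possibly with constants). $\langle\mathfrak A\rangle_{\mathrm{fo}}$, $\langle\mathfrak A\rangle_{\mathrm{pp}}$: relations on $A$ definable without parameters by first-order, resp. primitive positive formulas (built from atoms, equalities, $\bot$ using $\wedge,\exists$). $\mathrm{Pol}(\mathfrak A)$: homomorphisms $\mathfrak A^k\to\mathfrak A$ for finite $k$; $\mathrm{Pol}^\omega(\mathfrak A)$: homomorphisms $\mathfrak A^\kappa\to\mathfrak A$ for $\kappa\le\omega$ (direct powers). $\mathrm{Inv}(F)$: relations on $A$ preserved coordinatewise by all $f\in F$. An infinite structure $\mathfrak A$ is saturated if it is $|A|$-saturated: for every sequence of fewer than $|A|$ parameters, every set of first-order formulas in one free variable over them consistent with the theory of $\mathfrak A$ with these parameters named is realised in $A$. *)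

theory Defs
  imports "HOL-Library.FuncSet"
begin

record ('a, 'r, 'c) struc =
  carr :: "'a set"
  ar   :: "'r \<Rightarrow> nat"
  rel  :: "'r \<Rightarrow> 'a list set"
  cst  :: "'c \<Rightarrow> 'a"

definition wf_struc :: "('a, 'r, 'c) struc \<Rightarrow> bool" where
  "wf_struc A \<longleftrightarrow> carr A \<noteq> {} \<and> (\<forall>c. cst A c \<in> carr A) \<and>
     (\<forall>R. rel A R \<subseteq> {xs. length xs = ar A R \<and> set xs \<subseteq> carr A})"

datatype 'k trm = Var nat | Cst 'k

datatype ('r, 'k) fm =
    Bot
  | Eq "'k trm" "'k trm"
  | Atom 'r "'k trm list"
  | Neg "('r, 'k) fm"
  | Conj "('r, 'k) fm" "('r, 'k) fm"
  | Ex nat "('r, 'k) fm"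

fun tvars :: "'k trm \<Rightarrow> nat set" where
  "tvars (Var i) = {i}"
| "tvars (Cst c) = {}"

fun tcsts :: "'k trm \<Rightarrow> 'k set" where
  "tcsts (Var i) = {}"
| "tcsts (Cst c) = {c}"

fun FV :: "('r, 'k) fm \<Rightarrow> nat set" where
  "FV Bot = {}"
| "FV (Eq s t) = tvars s \<union> tvars t"
| "FV (Atom R ts) = (\<Union>t\<in>set ts. tvars t)"
| "FV (Neg \<phi>) = FV \<phi>"
| "FV (Conj \<phi> \<psi>) = FV \<phi> \<union> FV \<psi>"
| "FV (Ex n \<phi>) = FV \<phi> - {n}"

fun csts :: "('r, 'k) fm \<Rightarrow> 'k set" where
  "csts Bot = {}"
| "csts (Eq s t) = tcsts s \<union> tcsts t"
| "csts (Atom R ts) = (\<Union>t\<in>set ts. tcsts t)"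
| "csts (Neg \<phi>) = csts \<phi>"
| "csts (Conj \<phi> \<psi>) = csts \<phi> \<union> csts \<psi>"
| "csts (Ex n \<phi>) = csts \<phi>"

fun is_pp :: "('r, 'k) fm \<Rightarrow> bool" where
  "is_pp Bot = True"
| "is_pp (Eq s t) = True"
| "is_pp (Atom R ts) = True"
| "is_pp (Neg \<phi>) = False"
| "is_pp (Conj \<phi> \<psi>) = (is_pp \<phi> \<and> is_pp \<psi>)"
| "is_pp (Ex n \<phi>) = is_pp \<phi>"

fun teval :: "('k \<Rightarrow> 'a) \<Rightarrow> (nat \<Rightarrow> 'a) \<Rightarrow> 'k trm \<Rightarrow> 'a" where
  "teval ci e (Var i) = e i"
| "teval ci e (Cst c) = ci c"

fun sat :: "'a set \<Rightarrow> ('r \<Rightarrow> 'a list set) \<Rightarrow> ('k \<Rightarrow> 'a) \<Rightarrow> (nat \<Rightarrow> 'a)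
              \<Rightarrow> ('r, 'k) fm \<Rightarrow> bool" where
  "sat D rl ci e Bot = False"
| "sat D rl ci e (Eq s t) = (teval ci e s = teval ci e t)"
| "sat D rl ci e (Atom R ts) = (map (teval ci e) ts \<in> rl R)"
| "sat D rl ci e (Neg \<phi>) = (\<not> sat D rl ci e \<phi>)"
| "sat D rl ci e (Conj \<phi> \<psi>) = (sat D rl ci e \<phi> \<and> sat D rl ci e \<psi>)"
| "sat D rl ci e (Ex n \<phi>) = (\<exists>a\<in>D. sat D rl ci (e(n := a)) \<phi>)"

text \<open>A relation on the carrier is a pair (arity n, set of n-tuples).\<close>

definition tuples :: "('a, 'r, 'c) struc \<Rightarrow> nat \<Rightarrow> 'a list set" where
  "tuples A n = {xs. length xs = n \<and> set xs \<subseteq> carr A}"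

definition defined_by :: "('a, 'r, 'c) struc \<Rightarrow> nat \<Rightarrow> ('r, 'c) fm \<Rightarrow> 'a list set" where
  "defined_by A n \<phi> = {xs \<in> tuples A n. sat (carr A) (rel A) (cst A) (\<lambda>i. xs ! i) \<phi>}"

definition fo_rels :: "('a, 'r, 'c) struc \<Rightarrow> (nat \<times> 'a list set) set" where
  "fo_rels A = {(n, R). \<exists>\<phi>. FV \<phi> \<subseteq> {..<n} \<and> R = defined_by A n \<phi>}"

definition pp_rels :: "('a, 'r, 'c) struc \<Rightarrow> (nat \<times> 'a list set) set" where
  "pp_rels A = {(n, R). \<exists>\<phi>. is_pp \<phi> \<and> FV \<phi> \<subseteq> {..<n} \<and> R = defined_by A n \<phi>}"

text \<open>An operation of arity \<open>I\<close> (an index set, \<open>{..<k}\<close> or \<open>UNIV\<close> for \<open>\<omega>\<close>)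
acts on elements of the direct power \<open>A^I\<close>, represented as functions in
\<open>I \<rightarrow>\<^sub>E carr A\<close>.\<close>

definition preserves :: "('a, 'r, 'c) struc \<Rightarrow> nat set \<Rightarrow> ((nat \<Rightarrow> 'a) \<Rightarrow> 'a)
                          \<Rightarrow> nat \<Rightarrow> 'a list set \<Rightarrow> bool" where
  "preserves A I f n R \<longleftrightarrow>
     (\<forall>ts. length ts = n \<and> set ts \<subseteq> (I \<rightarrow>\<^sub>E carr A) \<and> (\<forall>i\<in>I. map (\<lambda>t. t i) ts \<in> R)
        \<longrightarrow> map f ts \<in> R)"

definition is_hom_power :: "('a, 'r, 'c) struc \<Rightarrow> nat set \<Rightarrow> ((nat \<Rightarrow> 'a) \<Rightarrow> 'a) \<Rightarrow> bool" where
  "is_hom_power A I f \<longleftrightarrow>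
     (\<forall>x \<in> I \<rightarrow>\<^sub>E carr A. f x \<in> carr A) \<and>
     (\<forall>c. f (\<lambda>i\<in>I. cst A c) = cst A c) \<and>
     (\<forall>R. preserves A I f (ar A R) (rel A R))"

definition Pol :: "('a, 'r, 'c) struc \<Rightarrow> (nat set \<times> ((nat \<Rightarrow> 'a) \<Rightarrow> 'a)) set" where
  "Pol A = {(I, f). (\<exists>k\<ge>1. I = {..<k}) \<and> is_hom_power A I f}"

definition Pol_omega :: "('a, 'r, 'c) struc \<Rightarrow> (nat set \<times> ((nat \<Rightarrow> 'a) \<Rightarrow> 'a)) set" where
  "Pol_omega A = {(I, f). ((\<exists>k\<ge>1. I = {..<k}) \<or> I = UNIV) \<and> is_hom_power A I f}"

definition Inv :: "('a, 'r, 'c) struc \<Rightarrow> (nat set \<times> ((nat \<Rightarrow> 'a) \<Rightarrow> 'a)) set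
                     \<Rightarrow> (nat \<times> 'a list set) set" where
  "Inv A F = {(n, R). R \<subseteq> tuples A n \<and> (\<forall>(I, f)\<in>F. preserves A I f n R)}"

text \<open>Formulas with parameters from the carrier are formulas over the signature
expanded by the elements of the carrier as new constants (\<open>Inr a\<close> names \<open>a\<close>).
A set of formulas in the free variable 0 is consistent with the theory of
\<open>(A, P)\<close> iff it is finitely satisfiable in \<open>A\<close>.  \<open>|P| < |A|\<close> is expressed
as: there is no injection of \<open>carr A\<close> into \<open>P\<close> (for \<open>P \<subseteq> carr A\<close>).\<close>

definition saturated :: "('a, 'r, 'c) struc \<Rightarrow> bool" where
  "saturated A \<longleftrightarrow> infinite (carr A) \<and>
    (\<forall>P \<subseteq> carr A. \<not> (\<exists>g. inj_on g (carr A) \<and> g ` carr A \<subseteq> P) \<longrightarrow>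
      (\<forall>\<Sigma> :: ('r, 'c + 'a) fm set.
         (\<forall>\<phi>\<in>\<Sigma>. FV \<phi> \<subseteq> {0} \<and> Inr -` csts \<phi> \<subseteq> P) \<and>
         (\<forall>\<Phi>\<subseteq>\<Sigma>. finite \<Phi> \<longrightarrow>
            (\<exists>a\<in>carr A. \<forall>\<phi>\<in>\<Phi>. sat (carr A) (rel A) (case_sum (cst A) id) (\<lambda>_. a) \<phi>))
         \<longrightarrow> (\<exists>a\<in>carr A. \<forall>\<phi>\<in>\<Sigma>. sat (carr A) (rel A) (case_sum (cst A) id) (\<lambda>_. a) \<phi>)))"

definition card_continuum :: "'a set \<Rightarrow> bool" where
  "card_continuum S \<longleftrightarrow> (\<exists>h. bij_betw h (UNIV :: nat set set) S)"

end

theory Submission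
  imports Defs "HOL-Library.Nat_Bijection" "HOL-Combinatorics.Transposition"
begin

text \<open>
Both structures have carrier \<open>2^\<omega>\<close> (sets of naturals) and only unary relations.

In \<open>Asat\<close>, the symbol \<open>{}\<close> means \<open>0 \<in> x\<close> and the symbol \<open>{n+1}\<close> means
\<open>0 \<notin> x \<and> x \<noteq> {n+1}\<close>.  A formula mentions finitely many symbols and parameters, and
transposing two sets that avoid them and agree on \<open>0\<close> is an automorphism of the
reduct it sees.  Hence over fewer than \<open>2^\<omega>\<close> parameters all but finitely many elements
of a formula realise one of two types, which gives saturation, and the intersection of
all relations \<open>{n+1}\<close>, invariant under every polymorphism, is not first-order definable.
The relation \<open>0 \<notin> x\<close> is first-order definable and preserved by the finitary
polymorphisms, whose finitely many arguments avoid some \<open>{n+1}\<close>; but the \<open>\<omega>\<close>-ary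
homomorphism sending the sequence \<open>({i+1})\<^sub>i\<close> to \<open>{0}\<close> breaks it, so it is not pp-definable.

In \<open>Aslice\<close>, the symbol \<open>s\<close> holds of the nonempty slices of \<open>s\<close> under
\<open>prod_encode\<close>.  Every countable family of nonempty sets consists of slices of one \<open>s\<close>,
so \<open>x \<noteq> {}\<close> is invariant under \<open>Pol\<^sup>\<omega>\<close>.  By a diagonal argument no relation contains
all sets \<open>insert 0 Y\<close>, so the homomorphism from the \<open>2^\<omega>\<close>-th power sending
\<open>insert 0\<close> to \<open>{}\<close> breaks \<open>x \<noteq> {}\<close>, while pp-definable relations are preserved by
homomorphisms from arbitrary powers.
\<close>

fun rels :: "('r, 'k) fm \<Rightarrow> 'r set" where
  "rels Bot = {}"
| "rels (Eq s t) = {}"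
| "rels (Atom R ts) = {R}"
| "rels (Neg \<phi>) = rels \<phi>"
| "rels (Conj \<phi> \<psi>) = rels \<phi> \<union> rels \<psi>"
| "rels (Ex n \<phi>) = rels \<phi>"

lemma finite_rels: "finite (rels \<phi>)"
  by (induction \<phi>) auto

lemma finite_csts: "finite (csts \<phi>)"
proof -
  have "finite (tcsts t)" for t :: "'k trm"
    by (cases t) auto
  then show ?thesis
    by (induction \<phi>) auto
qed

lemma sat_bij_invariant:
  assumes "bij \<pi>" "\<pi> ` D = D"
    and "\<forall>c\<in>csts \<phi>. \<pi> (ci c) = ci c"
    and "\<forall>R\<in>rels \<phi>. \<forall>xs. map \<pi> xs \<in> rl R \<longleftrightarrow> xs \<in> rl R"
    and "\<forall>v\<in>FV \<phi>. e' v = \<pi> (e v)"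
  shows "sat D rl ci e' \<phi> \<longleftrightarrow> sat D rl ci e \<phi>"
  using assms(3-)
proof (induction \<phi> arbitrary: e e')
  have teval: "teval ci e' t = \<pi> (teval ci e t)"
    if "\<forall>c\<in>tcsts t. \<pi> (ci c) = ci c" "\<forall>v\<in>tvars t. e' v = \<pi> (e v)" for t e e'
    using that by (cases t) auto
  {
    case (Eq s t)
    then have "teval ci e' s = \<pi> (teval ci e s)" "teval ci e' t = \<pi> (teval ci e t)"
      by (auto intro!: teval)
    then show ?case
      using bij_is_inj[OF assms(1)] by (auto dest: injD)
  next
    case (Atom R ts)
    then have "map (teval ci e') ts = map \<pi> (map (teval ci e) ts)"
      by (auto intro!: teval)
    with Atom show ?case by (simp del: map_map)
  next
    case (Conj \<phi> \<psi>)
    have "sat D rl ci e' \<phi> \<longleftrightarrow> sat D rl ci e \<phi>" "sat D rl ci e' \<psi> \<longleftrightarrow> sat D rl ci e \<psi>"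
      by (rule Conj.IH; use Conj.prems in simp)+
    then show ?case by simp
  next
    case (Ex n \<phi>)
    have IH: "sat D rl ci (e'(n := \<pi> a)) \<phi> \<longleftrightarrow> sat D rl ci (e(n := a)) \<phi>" for a
      using Ex by (intro Ex.IH) auto
    have "(\<exists>a\<in>D. sat D rl ci (e'(n := a)) \<phi>) \<longleftrightarrow> (\<exists>a\<in>\<pi> ` D. sat D rl ci (e'(n := a)) \<phi>)"
      using assms(2) by simp
    also have "\<dots> \<longleftrightarrow> (\<exists>a\<in>D. sat D rl ci (e(n := a)) \<phi>)"
      by (simp add: IH)
    finally show ?case by simp
  }
qed simp_all

lemma sat_FV_cong:
  assumes "\<forall>v\<in>FV \<phi>. e' v = e v"
  shows "sat D rl ci e' \<phi> \<longleftrightarrow> sat D rl ci e \<phi>"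
  using sat_bij_invariant[of id] assms by simp

text \<open>Homomorphisms into \<open>A\<close> from its full power indexed by an arbitrary type, possibly
uncountable, unlike those in \<open>Pol_omega\<close>.\<close>

definition power_hom :: "('a, 'r, 'c) struc \<Rightarrow> (('i \<Rightarrow> 'a) \<Rightarrow> 'a) \<Rightarrow> bool" where
  "power_hom A h \<longleftrightarrow>
     (\<forall>t. range t \<subseteq> carr A \<longrightarrow> h t \<in> carr A) \<and>
     (\<forall>c. h (\<lambda>_. cst A c) = cst A c) \<and>
     (\<forall>R ts. (\<forall>i. map (\<lambda>t. t i) ts \<in> rel A R) \<longrightarrow> map h ts \<in> rel A R)"

lemma sat_pp_power_hom:
  assumes "power_hom A h" "is_pp \<phi>"
    and "\<forall>i. sat (carr A) (rel A) (cst A) (E i) \<phi>"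
  shows "sat (carr A) (rel A) (cst A) (\<lambda>v. h (\<lambda>i. E i v)) \<phi>"
  using assms(2,3)
proof (induction \<phi> arbitrary: E)
  have teval: "teval (cst A) (\<lambda>v. h (\<lambda>i. E i v)) = (\<lambda>t. h (\<lambda>i. teval (cst A) (E i) t))" for E
  proof
    show "teval (cst A) (\<lambda>v. h (\<lambda>i. E i v)) t = h (\<lambda>i. teval (cst A) (E i) t)" for t
      using assms(1) by (cases t) (auto simp: power_hom_def)
  qed
  {
    case (Eq s t)
    then have "(\<lambda>i. teval (cst A) (E i) s) = (\<lambda>i. teval (cst A) (E i) t)"
      by simp
    then show ?case by (simp add: teval)
  next
    case (Atom R ts)
    then have "\<forall>i. map (\<lambda>t. t i) (map (\<lambda>tm i. teval (cst A) (E i) tm) ts) \<in> rel A R"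
      by (simp add: comp_def)
    then have "map h (map (\<lambda>tm i. teval (cst A) (E i) tm) ts) \<in> rel A R"
      using assms(1) by (simp add: power_hom_def del: map_map)
    then show ?case by (simp add: teval comp_def)
  next
    case (Ex n \<phi>)
    then obtain a where a: "\<forall>i. a i \<in> carr A \<and> sat (carr A) (rel A) (cst A) ((E i)(n := a i)) \<phi>"
      by simp metis
    then have "sat (carr A) (rel A) (cst A) (\<lambda>v. h (\<lambda>i. ((E i)(n := a i)) v)) \<phi>"
      using Ex.prems(1) a by (intro Ex.IH) (auto simp del: fun_upd_apply)
    moreover have "(\<lambda>v. h (\<lambda>i. ((E i)(n := a i)) v)) = (\<lambda>v. h (\<lambda>i. E i v))(n := h a)"
      by (auto simp: fun_eq_iff)
    moreover have "h a \<in> carr A"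
      using a assms(1) by (auto simp: power_hom_def)
    ultimately show ?case by auto
  }
qed auto

lemma pp_rels_subset_fo_rels: "pp_rels A \<subseteq> fo_rels A"
  unfolding pp_rels_def fo_rels_def by auto

lemma pp_rel_preserved_by_power_hom:
  assumes "(n, R) \<in> pp_rels A" "power_hom A h"
    and "length ts = n" "\<forall>i. map (\<lambda>t. t i) ts \<in> R"
  shows "map h ts \<in> R"
proof -
  obtain \<phi> where \<phi>: "is_pp \<phi>" "FV \<phi> \<subseteq> {..<n}" and R: "R = defined_by A n \<phi>"
    using assms(1) unfolding pp_rels_def by auto
  have column: "map (\<lambda>t. t i) ts \<in> tuples A n"
    and sat_column: "sat (carr A) (rel A) (cst A) (\<lambda>v. map (\<lambda>t. t i) ts ! v) \<phi>" for i
    using assms(3,4) R by (auto simp: defined_by_def)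
  then have "sat (carr A) (rel A) (cst A) (\<lambda>v. h (\<lambda>i. map (\<lambda>t. t i) ts ! v)) \<phi>"
    using sat_pp_power_hom[OF assms(2) \<phi>(1), of "\<lambda>i v. map (\<lambda>t. t i) ts ! v"] by blast
  moreover have "sat (carr A) (rel A) (cst A) (\<lambda>v. map h ts ! v) \<phi> \<longleftrightarrow>
      sat (carr A) (rel A) (cst A) (\<lambda>v. h (\<lambda>i. map (\<lambda>t. t i) ts ! v)) \<phi>"
    using \<phi>(2) assms(3) by (intro sat_FV_cong) auto
  moreover have "range t \<subseteq> carr A" if "t \<in> set ts" for t
    using column that by (auto simp: tuples_def)
  then have "map h ts \<in> tuples A n"
    using assms(2,3) by (auto simp: tuples_def power_hom_def)
  ultimately show ?thesis
    using R by (simp add: defined_by_def)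
qed

definition unary_rel :: "('a \<Rightarrow> bool) \<Rightarrow> 'a list set" where
  "unary_rel P = {[x] | x. P x}"

lemma in_unary_rel_iff [simp]: "xs \<in> unary_rel P \<longleftrightarrow> (\<exists>x. xs = [x] \<and> P x)"
  by (auto simp: unary_rel_def)

lemma length_eq_1_iff: "length xs = 1 \<longleftrightarrow> (\<exists>x. xs = [x])"
  by (cases xs) auto

lemma unary_rel_subset_tuples_iff: "unary_rel P \<subseteq> tuples A 1 \<longleftrightarrow> Collect P \<subseteq> carr A"
proof
  assume "unary_rel P \<subseteq> tuples A 1"
  then have "[x] \<in> tuples A 1" if "P x" for x
    using that by auto
  then show "Collect P \<subseteq> carr A"
    by (auto simp: tuples_def)
next
  assume "Collect P \<subseteq> carr A"
  then have "x \<in> carr A" if "P x" for x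
    using that by blast
  then show "unary_rel P \<subseteq> tuples A 1"
    by (auto simp: tuples_def)
qed

lemma preserves_unary_rel_iff:
  "preserves A I f 1 (unary_rel P) \<longleftrightarrow> (\<forall>t\<in>I \<rightarrow>\<^sub>E carr A. (\<forall>i\<in>I. P (t i)) \<longrightarrow> P (f t))"
proof
  assume preserves: "preserves A I f 1 (unary_rel P)"
  show "\<forall>t\<in>I \<rightarrow>\<^sub>E carr A. (\<forall>i\<in>I. P (t i)) \<longrightarrow> P (f t)"
  proof (intro ballI impI)
    fix t assume "t \<in> I \<rightarrow>\<^sub>E carr A" "\<forall>i\<in>I. P (t i)"
    then have "map f [t] \<in> unary_rel P"
      by (intro preserves[unfolded preserves_def, rule_format]) auto
    then show "P (f t)"
      by simp
  qed
next
  assume H: "\<forall>t\<in>I \<rightarrow>\<^sub>E carr A. (\<forall>i\<in>I. P (t i)) \<longrightarrow> P (f t)"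
  show "preserves A I f 1 (unary_rel P)"
    unfolding preserves_def
  proof (intro allI impI)
    fix ts assume ts: "length ts = 1 \<and> set ts \<subseteq> I \<rightarrow>\<^sub>E carr A \<and> (\<forall>i\<in>I. map (\<lambda>t. t i) ts \<in> unary_rel P)"
    then obtain t where "ts = [t]"
      unfolding length_eq_1_iff by blast
    with ts H show "map f ts \<in> unary_rel P"
      by simp
  qed
qed

lemma unary_rel_in_Inv_iff:
  "(1, unary_rel P) \<in> Inv A F \<longleftrightarrow>
     Collect P \<subseteq> carr A \<and> (\<forall>(I, f)\<in>F. \<forall>t\<in>I \<rightarrow>\<^sub>E carr A. (\<forall>i\<in>I. P (t i)) \<longrightarrow> P (f t))"
  unfolding Inv_def mem_Collect_eq case_prod_conv unary_rel_subset_tuples_iff preserves_unary_rel_iff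
  by (simp add: case_prod_beta')

lemma is_hom_power_unary:
  assumes "is_hom_power A I f" "ar A R = 1" "rel A R = unary_rel Q"
    and "t \<in> I \<rightarrow>\<^sub>E carr A" "\<forall>i\<in>I. Q (t i)"
  shows "Q (f t)"
proof -
  have "preserves A I f 1 (unary_rel Q)"
    using assms(1) unfolding is_hom_power_def assms(2,3)[symmetric] by (elim conjE spec)
  then show ?thesis
    using assms(4,5) unfolding preserves_unary_rel_iff by blast
qed

lemma power_hom_unaryI:
  fixes h :: "('i \<Rightarrow> 'a) \<Rightarrow> 'a"
  assumes "carr A = UNIV" "\<And>R. rel A R = unary_rel (Q R)"
    and "\<And>c. h (\<lambda>_. cst A c) = cst A c" "\<And>R t. \<forall>i. Q R (t i) \<Longrightarrow> Q R (h t)"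
  shows "power_hom A h"
  unfolding power_hom_def
proof (intro conjI allI impI)
  fix R and ts :: "('i \<Rightarrow> 'a) list"
  assume columns: "\<forall>i. map (\<lambda>t. t i) ts \<in> rel A R"
  then have "length ts = 1"
    using assms(2) by (metis in_unary_rel_iff length_map length_eq_1_iff)
  then obtain t where ts: "ts = [t]"
    unfolding length_eq_1_iff ..
  show "map h ts \<in> rel A R"
    using columns assms(2,4) by (simp add: ts)
qed (use assms(1,3) in simp_all)

lemma unary_pp_rel_preserved_by_power_hom:
  assumes "(1, unary_rel P) \<in> pp_rels A" "power_hom A h" "\<forall>i. P (x i)"
  shows "P (h x)"
  using pp_rel_preserved_by_power_hom[OF assms(1,2), of "[x]"] assms(3) by simp

lemma singleton_in_defined_by_iff:
  assumes "FV \<phi> \<subseteq> {..<1}"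
  shows "[x] \<in> defined_by A 1 \<phi> \<longleftrightarrow> x \<in> carr A \<and> sat (carr A) (rel A) (cst A) (\<lambda>_. x) \<phi>"
proof -
  have "sat (carr A) (rel A) (cst A) (\<lambda>v. [x] ! v) \<phi> \<longleftrightarrow> sat (carr A) (rel A) (cst A) (\<lambda>_. x) \<phi>"
    using assms by (intro sat_FV_cong) auto
  then show ?thesis
    by (simp add: defined_by_def tuples_def)
qed

lemma unary_rel_eq_defined_by:
  assumes "FV \<phi> \<subseteq> {..<1}" "Collect P \<subseteq> carr A"
    and "\<And>x. x \<in> carr A \<Longrightarrow> P x \<longleftrightarrow> sat (carr A) (rel A) (cst A) (\<lambda>_. x) \<phi>"
  shows "unary_rel P = defined_by A 1 \<phi>"
proof (rule set_eqI)
  fix xs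
  show "xs \<in> unary_rel P \<longleftrightarrow> xs \<in> defined_by A 1 \<phi>"
  proof (cases "\<exists>x. xs = [x]")
    case True
    then obtain x where xs: "xs = [x]" ..
    have "x \<in> carr A" if "P x"
      using assms(2) that by blast
    then have "[x] \<in> defined_by A 1 \<phi> \<longleftrightarrow> P x"
      unfolding singleton_in_defined_by_iff[OF assms(1)] using assms(3) by blast
    then show ?thesis
      by (simp add: xs)
  next
    case False
    then show ?thesis
      by (auto simp: defined_by_def tuples_def length_Suc_conv)
  qed
qed

lemma ex_Suc_singleton_notin:
  assumes "finite S"
  shows "\<exists>n. {Suc n} \<notin> S"
proof -
  have "finite ((\<lambda>n. {Suc n}) -` S)"
    using assms by (rule finite_vimageI) (simp add: inj_def)
  from ex_new_if_finite[OF infinite_UNIV_nat this] obtain n where "n \<notin> (\<lambda>n. {Suc n}) -` S" ..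
  then show ?thesis by auto
qed

definition Asat_rel :: "nat set \<Rightarrow> nat set \<Rightarrow> bool" where
  "Asat_rel s X \<longleftrightarrow> (s = {} \<and> 0 \<in> X) \<or> (\<exists>n. s = {Suc n} \<and> 0 \<notin> X \<and> X \<noteq> {Suc n})"

definition Asat :: "(nat set, nat set, nat set) struc" where
  "Asat = \<lparr>carr = UNIV, ar = (\<lambda>_. 1), rel = (\<lambda>s. unary_rel (Asat_rel s)), cst = (\<lambda>_. {0})\<rparr>"

lemma Asat_simps [simp]:
  "carr Asat = UNIV" "ar Asat s = 1" "rel Asat s = unary_rel (Asat_rel s)" "cst Asat c = {0}"
  by (simp_all add: Asat_def)

lemma Asat_rel_empty [simp]: "Asat_rel {} X \<longleftrightarrow> 0 \<in> X"
  by (auto simp: Asat_rel_def)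

lemma Asat_rel_singleton [simp]: "Asat_rel {Suc n} X \<longleftrightarrow> 0 \<notin> X \<and> X \<noteq> {Suc n}"
  by (auto simp: Asat_rel_def)

lemma wf_struc_Asat: "wf_struc Asat"
  by (auto simp: wf_struc_def)

lemma card_continuum_Asat: "card_continuum (carr Asat)"
  by (auto simp: card_continuum_def intro: bij_betw_id)

lemma sat_Asat_transpose:
  assumes "\<forall>c\<in>csts \<phi>. ci c \<noteq> a \<and> ci c \<noteq> b"
    and "\<forall>n. {Suc n} \<in> rels \<phi> \<longrightarrow> a \<noteq> {Suc n} \<and> b \<noteq> {Suc n}"
    and "0 \<in> a \<longleftrightarrow> 0 \<in> b"
    and "\<forall>v\<in>FV \<phi>. e' v = transpose a b (e v)"
  shows "sat UNIV (rel Asat) ci e' \<phi> \<longleftrightarrow> sat UNIV (rel Asat) ci e \<phi>"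
proof (rule sat_bij_invariant)
  show "\<forall>R\<in>rels \<phi>. \<forall>xs. map (transpose a b) xs \<in> rel Asat R \<longleftrightarrow> xs \<in> rel Asat R"
  proof (intro ballI allI)
    fix R xs assume "R \<in> rels \<phi>"
    then have "Asat_rel R a \<longleftrightarrow> Asat_rel R b"
      using assms(2,3) by (auto simp: Asat_rel_def)
    then have "Asat_rel R (transpose a b x) \<longleftrightarrow> Asat_rel R x" for x
      by (auto simp: transpose_def)
    then show "map (transpose a b) xs \<in> rel Asat R \<longleftrightarrow> xs \<in> rel Asat R"
      by (cases xs) auto
  qed
qed (use assms in \<open>auto simp: transpose_def\<close>)

abbreviation Asat_realises :: "nat set \<Rightarrow> (nat set, nat set + nat set) fm \<Rightarrow> bool" where
  "Asat_realises a \<phi> \<equiv> sat UNIV (rel Asat) (case_sum (cst Asat) id) (\<lambda>_. a) \<phi>"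

definition Asat_exceptional :: "(nat set, nat set + nat set) fm \<Rightarrow> nat set set" where
  "Asat_exceptional \<phi> = insert {0} (Inr -` csts \<phi> \<union> {{Suc n} | n. {Suc n} \<in> rels \<phi>})"

lemma finite_Asat_exceptional: "finite (Asat_exceptional \<phi>)"
proof -
  have "finite (Inr -` csts \<phi> :: nat set set)"
    by (rule finite_vimageI[OF finite_csts]) simp
  moreover have "finite {{Suc n} | n. {Suc n} \<in> rels \<phi>}"
    using finite_rels by (rule finite_subset[rotated]) auto
  ultimately show ?thesis
    by (simp add: Asat_exceptional_def)
qed

lemma notin_Asat_exceptional:
  assumes "{1, 2} \<subseteq> b" "Inr b \<notin> csts \<phi>"
  shows "b \<notin> Asat_exceptional \<phi>"
proof -
  have "b \<noteq> {0}" "b \<noteq> {Suc n}" for n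
    using assms(1) by auto
  then show ?thesis
    using assms(2) by (auto simp: Asat_exceptional_def)
qed

lemma Asat_realises_generic:
  assumes "a \<notin> Asat_exceptional \<phi>" "b \<notin> Asat_exceptional \<phi>" "0 \<in> a \<longleftrightarrow> 0 \<in> b"
  shows "Asat_realises a \<phi> \<longleftrightarrow> Asat_realises b \<phi>"
proof (rule sat_Asat_transpose)
  show "\<forall>c\<in>csts \<phi>. case_sum (cst Asat) id c \<noteq> b \<and> case_sum (cst Asat) id c \<noteq> a"
    using assms(1,2) by (auto simp: Asat_exceptional_def split: sum.split)
qed (use assms in \<open>auto simp: Asat_exceptional_def\<close>)

lemma Asat_finitely_realised_imp_realised:
  assumes fin: "\<forall>\<Phi>\<subseteq>\<Sigma>. finite \<Phi> \<longrightarrow> (\<exists>a. \<forall>\<phi>\<in>\<Phi>. Asat_realises a \<phi>)"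
    and b: "0 \<in> b\<^sub>1" "0 \<notin> b\<^sub>0" "\<forall>\<phi>\<in>\<Sigma>. b\<^sub>1 \<notin> Asat_exceptional \<phi> \<and> b\<^sub>0 \<notin> Asat_exceptional \<phi>"
  shows "\<exists>a. \<forall>\<phi>\<in>\<Sigma>. Asat_realises a \<phi>"
proof (rule ccontr)
  assume "\<nexists>a. \<forall>\<phi>\<in>\<Sigma>. Asat_realises a \<phi>"
  then obtain \<psi> where \<psi>: "\<And>a. \<psi> a \<in> \<Sigma>" "\<And>a. \<not> Asat_realises a (\<psi> a)"
    by metis
  define F where "F = {b\<^sub>1, b\<^sub>0} \<union> Asat_exceptional (\<psi> b\<^sub>1) \<union> Asat_exceptional (\<psi> b\<^sub>0)"
  have "finite (\<psi> ` F)" "\<psi> ` F \<subseteq> \<Sigma>"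
    using \<psi>(1) by (auto simp: F_def finite_Asat_exceptional)
  \<comment> \<open>A realiser of the finitely many formulas \<open>\<psi> ` F\<close> lies outside \<open>F\<close>, so it is
    generic for \<open>\<psi> b\<^sub>1\<close> and \<open>\<psi> b\<^sub>0\<close> and behaves like \<open>b\<^sub>1\<close> or like \<open>b\<^sub>0\<close>.\<close>
  then obtain a where a: "\<forall>\<phi>\<in>\<psi> ` F. Asat_realises a \<phi>"
    using fin by blast
  then have "a \<notin> F"
    using \<psi>(2) by auto
  show False
  proof (cases "0 \<in> a")
    case True
    then have "Asat_realises a (\<psi> b\<^sub>1) \<longleftrightarrow> Asat_realises b\<^sub>1 (\<psi> b\<^sub>1)"
      using \<open>a \<notin> F\<close> b \<psi>(1) by (intro Asat_realises_generic) (auto simp: F_def)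
    then show False
      using a \<psi>(2) by (auto simp: F_def)
  next
    case False
    then have "Asat_realises a (\<psi> b\<^sub>0) \<longleftrightarrow> Asat_realises b\<^sub>0 (\<psi> b\<^sub>0)"
      using \<open>a \<notin> F\<close> b \<psi>(1) by (intro Asat_realises_generic) (auto simp: F_def)
    then show False
      using a \<psi>(2) by (auto simp: F_def)
  qed
qed

lemma saturated_Asat: "saturated Asat"
  unfolding saturated_def Asat_simps(1)
proof (intro conjI allI impI)
  show "infinite (UNIV :: nat set set)"
    by (simp add: Finite_Set.finite_set)
next
  fix P :: "nat set set" and \<Sigma> :: "(nat set, nat set + nat set) fm set"
  assume small: "\<nexists>g :: nat set \<Rightarrow> nat set. inj_on g UNIV \<and> g ` UNIV \<subseteq> P"
  assume \<Sigma>: "(\<forall>\<phi>\<in>\<Sigma>. FV \<phi> \<subseteq> {0} \<and> Inr -` csts \<phi> \<subseteq> P) \<and>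
    (\<forall>\<Phi>\<subseteq>\<Sigma>. finite \<Phi> \<longrightarrow> (\<exists>a\<in>UNIV. \<forall>\<phi>\<in>\<Phi>. Asat_realises a \<phi>))"
  \<comment> \<open>Two injections of \<open>2^\<omega>\<close> into non-singletons, one into sets containing \<open>0\<close> and one
    avoiding \<open>0\<close>; as \<open>P\<close> is small, each of them leaves \<open>P\<close>.\<close>
  define code :: "nat set \<Rightarrow> nat set" where "code Y = {1, 2} \<union> (+) 3 ` Y" for Y
  have code: "0 \<notin> code Y" "{1, 2} \<subseteq> code Y" for Y
    by (auto simp: code_def)
  have code_mem: "x + 3 \<in> code Y \<longleftrightarrow> x \<in> Y" "x + 3 \<in> insert 0 (code Y) \<longleftrightarrow> x \<in> Y" for x Y
    by (auto simp: code_def image_iff)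
  have inj: "inj code" "inj (\<lambda>Y. insert 0 (code Y))"
    by (rule inj_on_inverseI[where g = "\<lambda>Z. {x. x + 3 \<in> Z}"], simp add: code_mem)+
  have avoid: "\<exists>Y. g Y \<notin> P" if "inj g" for g :: "nat set \<Rightarrow> nat set"
  proof (rule ccontr)
    assume "\<nexists>Y. g Y \<notin> P"
    then have "inj g \<and> range g \<subseteq> P"
      using that by auto
    with small[unfolded not_ex, rule_format, of g] show False
      by (rule notE)
  qed
  obtain Y\<^sub>1 Y\<^sub>0 where Y: "insert 0 (code Y\<^sub>1) \<notin> P" "code Y\<^sub>0 \<notin> P"
    using avoid[OF inj(2)] avoid[OF inj(1)] by blast
  have generic: "\<forall>\<phi>\<in>\<Sigma>. insert 0 (code Y\<^sub>1) \<notin> Asat_exceptional \<phi> \<and> code Y\<^sub>0 \<notin> Asat_exceptional \<phi>"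
  proof
    fix \<phi> assume "\<phi> \<in> \<Sigma>"
    then have "Inr -` csts \<phi> \<subseteq> P"
      using \<Sigma> by blast
    then have "Inr (insert 0 (code Y\<^sub>1)) \<notin> csts \<phi>" "Inr (code Y\<^sub>0) \<notin> csts \<phi>"
      using Y by blast+
    moreover have "{1, 2} \<subseteq> insert 0 (code Y\<^sub>1)" "{1, 2} \<subseteq> code Y\<^sub>0"
      using code(2) by blast+
    ultimately show "insert 0 (code Y\<^sub>1) \<notin> Asat_exceptional \<phi> \<and> code Y\<^sub>0 \<notin> Asat_exceptional \<phi>"
      by (simp add: notin_Asat_exceptional)
  qed
  have "\<forall>\<Phi>\<subseteq>\<Sigma>. finite \<Phi> \<longrightarrow> (\<exists>a. \<forall>\<phi>\<in>\<Phi>. Asat_realises a \<phi>)"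
    using \<Sigma> by blast
  then have "\<exists>a. \<forall>\<phi>\<in>\<Sigma>. Asat_realises a \<phi>"
    using code(1) generic by (rule Asat_finitely_realised_imp_realised[OF _ insertI1])
  then show "\<exists>a\<in>UNIV. \<forall>\<phi>\<in>\<Sigma>. Asat_realises a \<phi>"
    by blast
qed

lemma Asat_not_fo:
  "(1, unary_rel (\<lambda>X. 0 \<notin> X \<and> (\<forall>n. X \<noteq> {Suc n}))) \<notin> fo_rels Asat"
proof
  assume "(1, unary_rel (\<lambda>X. 0 \<notin> X \<and> (\<forall>n. X \<noteq> {Suc n}))) \<in> fo_rels Asat"
  then obtain \<phi> where FV: "FV \<phi> \<subseteq> {..<1}"
    and R: "unary_rel (\<lambda>X. 0 \<notin> X \<and> (\<forall>n. X \<noteq> {Suc n})) = defined_by Asat 1 \<phi>"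
    unfolding fo_rels_def by blast
  obtain N where N: "{Suc N} \<notin> rels \<phi>"
    using ex_Suc_singleton_notin[OF finite_rels] by blast
  have "sat UNIV (rel Asat) (cst Asat) (\<lambda>_. {Suc N}) \<phi> \<longleftrightarrow> sat UNIV (rel Asat) (cst Asat) (\<lambda>_. {}) \<phi>"
    using N by (intro sat_Asat_transpose[where a = "{}" and b = "{Suc N}"]) auto
  moreover have "[{}] \<in> defined_by Asat 1 \<phi>" "[{Suc N}] \<notin> defined_by Asat 1 \<phi>"
    unfolding R[symmetric] by simp_all
  ultimately show False
    unfolding singleton_in_defined_by_iff[OF FV] by simp
qed

lemma Asat_nonsingleton_in_Inv_Pol_omega:
  "(1, unary_rel (\<lambda>X. 0 \<notin> X \<and> (\<forall>n. X \<noteq> {Suc n}))) \<in> Inv Asat (Pol_omega Asat)"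
proof -
  have "0 \<notin> f t \<and> (\<forall>n. f t \<noteq> {Suc n})"
    if "is_hom_power Asat I f" "t \<in> I \<rightarrow>\<^sub>E UNIV" "\<forall>i\<in>I. 0 \<notin> t i \<and> (\<forall>n. t i \<noteq> {Suc n})"
    for I f t
  proof -
    have "Asat_rel {Suc n} (f t)" for n
      using that by (intro is_hom_power_unary[where A = Asat and R = "{Suc n}" and Q = "Asat_rel {Suc n}"]) auto
    then show ?thesis
      by auto
  qed
  then show ?thesis
    unfolding unary_rel_in_Inv_iff Pol_omega_def by auto
qed

lemma Inv_Pol_omega_Asat_neq_pp_rels: "Inv Asat (Pol_omega Asat) \<noteq> pp_rels Asat"
  using Asat_nonsingleton_in_Inv_Pol_omega Asat_not_fo pp_rels_subset_fo_rels by blast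

lemma Asat_zero_free_in_Inv_Pol: "(1, unary_rel (\<lambda>X. 0 \<notin> X)) \<in> Inv Asat (Pol Asat)"
proof -
  have "0 \<notin> f t" if "is_hom_power Asat {..<k} f" "t \<in> {..<k} \<rightarrow>\<^sub>E UNIV" "\<forall>i<k. 0 \<notin> t i" for k f t
  proof -
    obtain n where "{Suc n} \<notin> t ` {..<k}"
      using ex_Suc_singleton_notin by blast
    then have "Asat_rel {Suc n} (f t)"
      using that by (intro is_hom_power_unary[where A = Asat and R = "{Suc n}" and Q = "Asat_rel {Suc n}"]) auto
    then show ?thesis
      by simp
  qed
  then show ?thesis
    unfolding unary_rel_in_Inv_iff Pol_def by auto
qed

lemma Asat_zero_free_in_fo_rels: "(1, unary_rel (\<lambda>X. 0 \<notin> X)) \<in> fo_rels Asat"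
  unfolding fo_rels_def mem_Collect_eq case_prod_conv
proof (intro exI conjI)
  show "FV (Neg (Atom {} [Var 0])) \<subseteq> {..<1}"
    by simp
  show "unary_rel (\<lambda>X. 0 \<notin> X) = defined_by Asat 1 (Neg (Atom {} [Var 0]))"
    by (rule unary_rel_eq_defined_by) auto
qed

lemma Asat_zero_free_not_in_pp_rels: "(1, unary_rel (\<lambda>X. 0 \<notin> X)) \<notin> pp_rels Asat"
proof
  assume pp: "(1, unary_rel (\<lambda>X. 0 \<notin> X)) \<in> pp_rels Asat"
  define h :: "(nat \<Rightarrow> nat set) \<Rightarrow> nat set" where
    "h t = (if t = (\<lambda>i. {Suc i}) then {0} else t 0)" for t
  have "power_hom Asat h"
  proof (rule power_hom_unaryI[where Q = Asat_rel])
    show "h (\<lambda>_. cst Asat c) = cst Asat c" for c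
      by (simp add: h_def fun_eq_iff)
    show "Asat_rel R (h t)" if "\<forall>i. Asat_rel R (t i)" for R t
    proof (cases "t = (\<lambda>i. {Suc i})")
      case True
      with that have "Asat_rel R {Suc i}" for i
        by simp
      moreover from this[of 0] obtain n where "R = {Suc n}"
        by (auto simp: Asat_rel_def)
      ultimately show ?thesis
        by (metis Asat_rel_singleton)
    next
      case False
      with that show ?thesis
        by (simp add: h_def)
    qed
  qed simp_all
  then have "0 \<notin> h (\<lambda>i. {Suc i})"
    by (rule unary_pp_rel_preserved_by_power_hom[OF pp]) simp
  then show False
    by (simp add: h_def)
qed

lemma Inv_Pol_Asat_inter_fo_rels_neq_pp_rels: "Inv Asat (Pol Asat) \<inter> fo_rels Asat \<noteq> pp_rels Asat"
  using Asat_zero_free_in_Inv_Pol Asat_zero_free_in_fo_rels Asat_zero_free_not_in_pp_rels by blast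

definition slice :: "nat \<Rightarrow> nat set \<Rightarrow> nat set" where
  "slice k s = {m. prod_encode (k, m) \<in> s}"

lemma ex_slices_eq: "\<exists>s. \<forall>k. slice k s = t k"
proof
  show "\<forall>k. slice k {prod_encode (k, m) | k m. m \<in> t k} = t k"
    by (auto simp: slice_def)
qed

lemma ex_insert_0_not_slice: "\<exists>Y. \<forall>k. insert 0 Y \<noteq> slice k s"
proof
  have "Suc k \<in> insert 0 {Suc k | k. Suc k \<notin> slice k s} \<longleftrightarrow> Suc k \<notin> slice k s" for k
    by auto
  then show "\<forall>k. insert 0 {Suc k | k. Suc k \<notin> slice k s} \<noteq> slice k s"
    by metis
qed

definition Aslice_rel :: "nat set \<Rightarrow> nat set \<Rightarrow> bool" where
  "Aslice_rel s X \<longleftrightarrow> X \<noteq> {} \<and> (\<exists>k. X = slice k s)"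

definition Aslice :: "(nat set, nat set, nat set) struc" where
  "Aslice = \<lparr>carr = UNIV, ar = (\<lambda>_. 1), rel = (\<lambda>s. unary_rel (Aslice_rel s)), cst = (\<lambda>_. {})\<rparr>"

lemma Aslice_simps [simp]:
  "carr Aslice = UNIV" "ar Aslice s = 1" "rel Aslice s = unary_rel (Aslice_rel s)" "cst Aslice c = {}"
  by (simp_all add: Aslice_def)

lemma wf_struc_Aslice: "wf_struc Aslice"
  by (auto simp: wf_struc_def)

lemma Aslice_nonempty_in_Inv_Pol_omega: "(1, unary_rel (\<lambda>X. X \<noteq> {})) \<in> Inv Aslice (Pol_omega Aslice)"
proof -
  have "f t \<noteq> {}" if "is_hom_power Aslice I f" "t \<in> I \<rightarrow>\<^sub>E UNIV" "\<forall>i\<in>I. t i \<noteq> {}" for I f t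
  proof -
    obtain s where "\<forall>k. slice k s = t k"
      using ex_slices_eq by blast
    then have "Aslice_rel s (f t)"
      using that by (intro is_hom_power_unary[where A = Aslice and R = s and Q = "Aslice_rel s"])
        (auto simp: Aslice_rel_def)
    then show ?thesis
      by (simp add: Aslice_rel_def)
  qed
  then show ?thesis
    unfolding unary_rel_in_Inv_iff Pol_omega_def by auto
qed

lemma Aslice_nonempty_in_fo_rels: "(1, unary_rel (\<lambda>X. X \<noteq> {})) \<in> fo_rels Aslice"
  unfolding fo_rels_def mem_Collect_eq case_prod_conv
proof (intro exI conjI)
  show "FV (Neg (Eq (Var 0) (Cst {}))) \<subseteq> {..<1}"
    by simp
  show "unary_rel (\<lambda>X. X \<noteq> {}) = defined_by Aslice 1 (Neg (Eq (Var 0) (Cst {})))"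
    by (rule unary_rel_eq_defined_by) auto
qed

lemma Aslice_nonempty_not_in_pp_rels: "(1, unary_rel (\<lambda>X. X \<noteq> {})) \<notin> pp_rels Aslice"
proof
  assume pp: "(1, unary_rel (\<lambda>X. X \<noteq> {})) \<in> pp_rels Aslice"
  define h :: "(nat set \<Rightarrow> nat set) \<Rightarrow> nat set" where
    "h t = (if t = insert 0 then {} else t {0})" for t
  have "power_hom Aslice h"
  proof (rule power_hom_unaryI[where Q = Aslice_rel])
    show "h (\<lambda>_. cst Aslice c) = cst Aslice c" for c
      by (simp add: h_def)
    show "Aslice_rel R (h t)" if "\<forall>Y. Aslice_rel R (t Y)" for R t
    proof (cases "t = insert 0")
      case True
      obtain Y where "\<forall>k. insert 0 Y \<noteq> slice k R"
        using ex_insert_0_not_slice by blast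
      with True that show ?thesis
        by (auto simp: Aslice_rel_def)
    next
      case False
      with that show ?thesis
        by (simp add: h_def)
    qed
  qed simp_all
  then have "h (insert 0) \<noteq> {}"
    by (rule unary_pp_rel_preserved_by_power_hom[OF pp]) simp
  then show False
    by (simp add: h_def)
qed

lemma Inv_Pol_omega_Aslice_inter_fo_rels_neq_pp_rels:
  "Inv Aslice (Pol_omega Aslice) \<inter> fo_rels Aslice \<noteq> pp_rels Aslice"
  using Aslice_nonempty_in_Inv_Pol_omega Aslice_nonempty_in_fo_rels Aslice_nonempty_not_in_pp_rels
  by blast

theorem proposition5:
  shows "(\<exists>A :: (nat set, nat set, nat set) struc.
            wf_struc A \<and> saturated A \<and> card_continuum (carr A) \<and>
            Inv A (Pol_omega A) \<noteq> pp_rels A)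
       \<and> (\<exists>A :: (nat set, nat set, nat set) struc.
            wf_struc A \<and> saturated A \<and> card_continuum (carr A) \<and>
            Inv A (Pol A) \<inter> fo_rels A \<noteq> pp_rels A)
       \<and> (\<exists>A :: (nat set, nat set, nat set) struc.
            wf_struc A \<and> Inv A (Pol_omega A) \<inter> fo_rels A \<noteq> pp_rels A)"
  using wf_struc_Asat saturated_Asat card_continuum_Asat
    Inv_Pol_omega_Asat_neq_pp_rels Inv_Pol_Asat_inter_fo_rels_neq_pp_rels
    wf_struc_Aslice Inv_Pol_omega_Aslice_inter_fo_rels_neq_pp_rels
  by blast

end
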